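(* In iTML: (1) if $\mu,R,T \searrow \rho,\mu',M,U$ and $\mu,R,T \searrow \rho',\mu'',M',U'$ then $(\rho,\mu',M,U) = (\rho',\mu'',M',U')$; (2) suppose $T :: \rho',\nu,M' \Rightarrow \nu',R'$; then for every $(\mu,R) \sqsubseteq (\nu',R')$ there exists $(\rho,\mu',M,U) \sqsubseteq (\rho',\nu,M',T)$ such that $\mu,R,T \searrow \rho,\mu',M,U$.
   Context: Partial syntax of iTML ($\Box$ a hole). Expressions $e ::= x \mid () \mid \mathsf{inl}\,e \mid \mathsf{inr}\,e \mid (e_1,e_2) \mid \mathsf{fst}\,e \mid \mathsf{snd}\,e \mid \mathsf{fun}\,f(x).M \mid \Box$. Computations $M ::= \mathsf{return}\,e \mid \mathsf{let}\,x = M_1\,\mathsf{in}\,M_2 \mid e_1\,e_2 \mid \mathsf{case}\,e\,\mathsf{of}\,\{\mathsf{inl}\,x \to M_1; \mathsf{inr}\,y \to M_2\} \mid \mathsf{raise}\,e \mid \mathsf{try}\,M_1\,\mathsf{with}\,x \to M_2 \mid \mathsf{ref}\,e \mid e_1 := e_2 \mid !e \mid \Box$. Values $v ::= () \mid \mathsf{inl}\,v \mid \mathsf{inr}\,v \mid (v_1,v_2) \mid \langle\rho,\mathsf{fun}\,f(x).M\rangle \mid \ell \mid \Box$. Environments $\rho$ / stores $\mu$: finitely supported maps from variables / locations to values, regarded as total with value $\Box$ off their domain; $\rho[x\mapsto v]$ extends, $\mu[\ell\mapsto v]$ updates; $\Box$ also denotes the everywhere-$\Box$ environment, $\Box[x\mapsto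 v]$ the environment that is $\Box$ except at $x$, and $[\ell\mapsto v]$ the store that is $\Box$ except at $\ell$. Outcomes $k ::= \mathsf{val}\mid\mathsf{exn}$; results $R ::= k\,v$. Traces $T ::= \mathsf{return}\,e \mid \mathsf{let_F}(T) \mid \mathsf{let_S}(T_1,x.T_2) \mid \mathsf{app}(e_1,e_2,f.x.T) \mid \mathsf{caseL}(e,x.T,y) \mid \mathsf{caseR}(e,x,y.T) \mid \mathsf{raise}\,e \mid \mathsf{try_S}(T) \mid \mathsf{try_F}(T_1,x.T_2) \mid \mathsf{ref}_\ell\,e \mid e_1:=_\ell e_2 \mid !_\ell\,e \mid \Box^k_{\mathcal{L}}$ ($\mathcal{L}$ a finite set of locations). $\mathsf{writes}(T)$: $\mathcal{L}$ for $\Box^k_{\mathcal{L}}$; $\emptyset$ for $\mathsf{return}\,e,\mathsf{raise}\,e,!_\ell e$; $\{\ell\}$ for $\mathsf{ref}_\ell e$, $e_1:=_\ell e_2$; union of both subtraces for $\mathsf{let_S}$, $\mathsf{try_F}$; that of the unique subtrace for $\mathsf{let_F},\mathsf{try_S},\mathsf{app},\mathsf{caseL},\mathsf{caseR}$. $\mathsf{outcome}(T)$: $k$ for $\Box^k_{\mathcal{L}}$; $\mathsf{val}$ for $\mathsf{return},\mathsf{try_S},\mathsf{ref}_\ell,:=_\ell,!_\ell$; $\mathsf{exn}$ for $\mathsf{let_F},\mathsf{raise}$; outcome of $T_2$ for $\mathsf{let_S}(T_1,x.T_2),\mathsf{try_F}(T_1,x.T_2)$; outcome of the subtrace for $\mathsf{app},\mathsf{caseL},\mathsf{caseR}$.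 Order $\sqsubseteq$: on expressions, computations, values the least order with $\Box\sqsubseteq t$ closed under constructors componentwise; $k\,v\sqsubseteq k\,v'$ iff $v\sqsubseteq v'$ (same $k$); pointwise on environments and stores; on traces the least order containing $\Box^k_{\mathcal{L}}\sqsubseteq T$ whenever $\mathsf{writes}(T)=\mathcal{L}$ and $\mathsf{outcome}(T)=k$, closed under trace constructors componentwise; componentwise on tuples; $\sqcup$ denotes join (of elements below a common element). Store erasure: $\mu\triangleleft\mathcal{L}$ is $\mu$ with every $\ell\in\mathcal{L}$ mapped to $\Box$. Evaluation (hole-free): $\rho,x\Rightarrow\rho(x)$; $()\Rightarrow()$; $\mathsf{fun}\,f(x).M\Rightarrow\langle\rho,\mathsf{fun}\,f(x).M\rangle$; $\mathsf{inl},\mathsf{inr}$, pairs componentwise; $\mathsf{fst},\mathsf{snd}$ project. $\mathsf{return}\,e::\rho,\mu,\mathsf{return}\,e\Rightarrow\mu,\mathsf{val}\,v$ if $\rho,e\Rightarrow v$; $\mathsf{app}(e_1,e_2,f.x.T)::\rho,\mu,e_1\,e_2\Rightarrow\mu',R$ if $\rho,e_1\Rightarrow v_1=\langle\rho',\mathsf{fun}\,f(x).M\rangle$, $\rho,e_2\Rightarrow v_2$, $T::\rho'[f\mapsto v_1][x\mapsto v_2],\mu,M\Rightarrow\mu',R$; $\mathsf{raise}\,e::\rho,\mu,\mathsf{raise}\,e\Rightarrow\mu,\mathsf{exn}\,v$ if $\rho,e\Rightarrow v$; $\mathsf{ref}_\ell\,e::\rho,\mu,\mathsf{ref}\,e\Rightarrow\mu[\ell\mapsto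 v],\mathsf{val}\,\ell$ if $\rho,e\Rightarrow v$, $\ell\notin\mathrm{dom}\,\mu$; $e_1:=_\ell e_2::\rho,\mu,e_1:=e_2\Rightarrow\mu[\ell\mapsto v],\mathsf{val}\,()$ if $\rho,e_1\Rightarrow\ell$, $\rho,e_2\Rightarrow v$; $!_\ell e::\rho,\mu,!e\Rightarrow\mu,\mathsf{val}\,\mu(\ell)$ if $\rho,e\Rightarrow\ell\in\mathrm{dom}\,\mu$; $\mathsf{let_S}(T_1,x.T_2)::\rho,\mu,\mathsf{let}\,x=M_1\,\mathsf{in}\,M_2\Rightarrow\mu'',R$ if $T_1::\rho,\mu,M_1\Rightarrow\mu',\mathsf{val}\,v$ and $T_2::\rho[x\mapsto v],\mu',M_2\Rightarrow\mu'',R$; $\mathsf{let_F}(T)::\ldots\Rightarrow\mu',\mathsf{exn}\,v$ if $T::\rho,\mu,M_1\Rightarrow\mu',\mathsf{exn}\,v$; $\mathsf{try_F}(T_1,x.T_2)::\rho,\mu,\mathsf{try}\,M_1\,\mathsf{with}\,x\to M_2\Rightarrow\mu'',R$ if $T_1::\rho,\mu,M_1\Rightarrow\mu',\mathsf{exn}\,v$, $T_2::\rho[x\mapsto v],\mu',M_2\Rightarrow\mu'',R$; $\mathsf{try_S}(T_1)::\ldots\Rightarrow\mu',\mathsf{val}\,v$ if $T_1::\rho,\mu,M_1\Rightarrow\mu',\mathsf{val}\,v$; $\mathsf{caseL}(e,x.T,y)::\rho,\mu,\mathsf{case}\,e\,\mathsf{of}\{\mathsf{inl}\,x\to M_1;\mathsf{inr}\,y\to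 M_2\}\Rightarrow\mu',R$ if $\rho,e\Rightarrow\mathsf{inl}\,v$, $T::\rho[x\mapsto v],\mu,M_1\Rightarrow\mu',R$; symmetrically $\mathsf{caseR}(e,x,y.T)$. Expression backward slicing $v,e\searrow\rho,e'$ (first rule used whenever it applies): $\Box,e\searrow\Box,\Box$; for $v\neq\Box$, $v,x\searrow\Box[x\mapsto v],x$; $\langle\rho,\mathsf{fun}\,f(x).M\rangle,\mathsf{fun}\,f(x).M'\searrow\rho,\mathsf{fun}\,f(x).M$; $(),()\searrow\Box,()$; $\mathsf{inl}\,v,\mathsf{inl}\,e\searrow\rho,\mathsf{inl}\,e'$ and $\mathsf{inr}\,v,\mathsf{inr}\,e\searrow\rho,\mathsf{inr}\,e'$ if $v,e\searrow\rho,e'$; $(v_1,v_2),(e_1,e_2)\searrow\rho_1\sqcup\rho_2,(e_1',e_2')$ if $v_i,e_i\searrow\rho_i,e_i'$; $v,\mathsf{fst}\,e\searrow\rho,\mathsf{fst}\,e'$ if $(v,\Box),e\searrow\rho,e'$; $v,\mathsf{snd}\,e\searrow\rho,\mathsf{snd}\,e'$ if $(\Box,v),e\searrow\rho,e'$. Computation backward slicing $\mu,R,T\searrow\rho,\mu',M,U$ (rule B-Slice$\Box$ is applied whenever it applies): (B-Slice$\Box$) if $\mu\triangleleft\mathsf{writes}(T)=\mu$ then $\mu,k\,\Box,T\searrow\Box,\mu,\Box,\Box^k_{\mathsf{writes}(T)}$. (B-Ret) $v,e\searrow\rho,e'$ ⟹ $\mu,\mathsf{val}\,v,\mathsf{return}\,e\searrow\rho,\mu,\mathsf{return}\,e',\mathsf{return}\,e'$.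 (B-Let) $\mu,R,T_2\searrow\rho_2[x\mapsto v],\mu',M_2,U_2$ and $\mu',\mathsf{val}\,v,T_1\searrow\rho_1,\mu'',M_1,U_1$ ⟹ $\mu,R,\mathsf{let_S}(T_1,x.T_2)\searrow\rho_1\sqcup\rho_2,\mu'',\mathsf{let}\,x=M_1\,\mathsf{in}\,M_2,\mathsf{let_S}(U_1,x.U_2)$. (B-LetFail) $\mu,\mathsf{exn}\,v,T_1\searrow\rho,\mu',M_1,U_1$ ⟹ $\mu,\mathsf{exn}\,v,\mathsf{let_F}(T_1)\searrow\rho,\mu',\mathsf{let}\,x=M_1\,\mathsf{in}\,\Box,\mathsf{let_F}(U_1)$. (B-CaseL) $\mu,R,T\searrow\rho[x\mapsto v],\mu',M_1,U$ and $\mathsf{inl}\,v,e\searrow\rho',e'$ ⟹ $\mu,R,\mathsf{caseL}(e,x.T,y)\searrow\rho\sqcup\rho',\mu',\mathsf{case}\,e'\,\mathsf{of}\{\mathsf{inl}\,x\to M_1;\mathsf{inr}\,y\to\Box\},\mathsf{caseL}(e',x.U,y)$. (B-CaseR) $\mu,R,T\searrow\rho[y\mapsto v],\mu',M_2,U$ and $\mathsf{inr}\,v,e\searrow\rho',e'$ ⟹ $\mu,R,\mathsf{caseR}(e,x,y.T)\searrow\rho\sqcup\rho',\mu',\mathsf{case}\,e'\,\mathsf{of}\{\mathsf{inl}\,x\to\Box;\mathsf{inr}\,y\to M_2\},\mathsf{caseR}(e',x,y.U)$. (B-App) $\mu,R,T\searrow\rho[f\mapsto v_1][x\mapsto v_2],\mu',M,U$,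 $v_2,e_2\searrow\rho_2,e_2'$, $v_1\sqcup\langle\rho,\mathsf{fun}\,f(x).M\rangle,e_1\searrow\rho_1,e_1'$ ⟹ $\mu,R,\mathsf{app}(e_1,e_2,f.x.T)\searrow\rho_1\sqcup\rho_2,\mu',e_1'\,e_2',\mathsf{app}(e_1',e_2',f.x.U)$. (B-Raise) $v,e\searrow\rho,e'$ ⟹ $\mu,\mathsf{exn}\,v,\mathsf{raise}\,e\searrow\rho,\mu,\mathsf{raise}\,e',\mathsf{raise}\,e'$. (B-TryFail) $\mu,R,T_2\searrow\rho_1[x\mapsto v],\mu',M_2,U_2$ and $\mu',\mathsf{exn}\,v,T_1\searrow\rho_2,\mu'',M_1,U_1$ ⟹ $\mu,R,\mathsf{try_F}(T_1,x.T_2)\searrow\rho_1\sqcup\rho_2,\mu'',\mathsf{try}\,M_1\,\mathsf{with}\,x\to M_2,\mathsf{try_F}(U_1,x.U_2)$. (B-Try) $\mu,\mathsf{val}\,v,T_1\searrow\rho,\mu',M_1,U_1$ ⟹ $\mu,\mathsf{val}\,v,\mathsf{try_S}(T_1)\searrow\rho,\mu',\mathsf{try}\,M_1\,\mathsf{with}\,x\to\Box,\mathsf{try_S}(U_1)$. (B-Ref) $\mu(\ell),e\searrow\rho,e'$ ⟹ $\mu,\mathsf{val}\,v,\mathsf{ref}_\ell\,e\searrow\rho,\mu[\ell\mapsto\Box],\mathsf{ref}\,e',\mathsf{ref}_\ell\,e'$. (B-Assign) $\mu(\ell),e_2\searrow\rho_2,e_2'$ and $\ell,e_1\searrow\rho_1,e_1'$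 ⟹ $\mu,\mathsf{val}\,v,e_1:=_\ell e_2\searrow\rho_1\sqcup\rho_2,\mu[\ell\mapsto\Box],e_1':=e_2',e_1':=_\ell e_2'$. (B-Deref) $\ell,e\searrow\rho,e'$ ⟹ $\mu,\mathsf{val}\,v,!_\ell e\searrow\rho,\mu\sqcup[\ell\mapsto v],!e',!_\ell e'$. *)

theory Defs
  imports Main "HOL-Library.FSet"
begin

section \<open>Syntax of iTML (partial, with holes), de Bruijn representation of binders\<close>

text \<open>Variables are de Bruijn indices (so that terms and traces are identified up to
  alpha-equivalence, as in the paper). A binder \<open>x.\<close> binds index 0; \<open>fun f(x).M\<close>
  binds x as index 0 and f as index 1 in M.\<close>

type_synonym var = nat
type_synonym loc = nat

datatype exp =
    EVar var
  | EUnit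
  | EInl exp
  | EInr exp
  | EPair exp exp
  | EFst exp
  | ESnd exp
  | EFun comp          \<comment> \<open>fun f(x).M\<close>
  | EHole
and comp =
    CReturn exp
  | CLet comp comp     \<comment> \<open>let x = M1 in M2\<close>
  | CApp exp exp
  | CCase exp comp comp  \<comment> \<open>case e of {inl x -> M1; inr y -> M2}\<close>
  | CRaise exp
  | CTry comp comp     \<comment> \<open>try M1 with x -> M2\<close>
  | CRef exp
  | CAssign exp exp
  | CDeref exp
  | CHole

datatype val =
    VUnit
  | VInl val
  | VInr val
  | VPair val val
  | VClo "var \<Rightarrow> val" comp   \<comment> \<open>closure <rho, fun f(x).M>\<close>
  | VLoc loc
  | VHole

type_synonym env = "var \<Rightarrow> val"
type_synonym store = "loc \<Rightarrow> val"

datatype outcome = OVal | OExn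

datatype res = Res outcome val

primrec res_val :: "res \<Rightarrow> val" where
  "res_val (Res k v) = v"

datatype trace =
    TReturn exp
  | TLetF trace
  | TLetS trace trace            \<comment> \<open>let_S(T1, x.T2)\<close>
  | TApp exp exp trace           \<comment> \<open>app(e1, e2, f.x.T)\<close>
  | TCaseL exp trace             \<comment> \<open>caseL(e, x.T, y)\<close>
  | TCaseR exp trace             \<comment> \<open>caseR(e, x, y.T)\<close>
  | TRaise exp
  | TTryS trace
  | TTryF trace trace            \<comment> \<open>try_F(T1, x.T2)\<close>
  | TRef loc exp
  | TAssign exp loc exp
  | TDeref loc exp
  | THole outcome "loc fset"

definition box :: "var \<Rightarrow> val" where
  "box = (\<lambda>_. VHole)"

text \<open>extension rho[x |-> v] (x is the newly bound index 0)\<close>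
definition ext :: "env \<Rightarrow> val \<Rightarrow> env" where
  "ext \<rho> v = (\<lambda>i. case i of 0 \<Rightarrow> v | Suc j \<Rightarrow> \<rho> j)"

definition sbox :: store where
  "sbox = (\<lambda>_. VHole)"

definition sdom :: "store \<Rightarrow> loc set" where
  "sdom \<mu> = {l. \<mu> l \<noteq> VHole}"

definition erase :: "store \<Rightarrow> loc fset \<Rightarrow> store" where
  "erase \<mu> L = (\<lambda>l. if l |\<in>| L then VHole else \<mu> l)"

primrec writes :: "trace \<Rightarrow> loc fset" where
  "writes (THole k L) = L"
| "writes (TReturn e) = {||}"
| "writes (TRaise e) = {||}"
| "writes (TDeref l e) = {||}"
| "writes (TRef l e) = {|l|}"
| "writes (TAssign e1 l e2) = {|l|}"
| "writes (TLetS T1 T2) = writes T1 |\<union>| writes T2"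
| "writes (TTryF T1 T2) = writes T1 |\<union>| writes T2"
| "writes (TLetF T) = writes T"
| "writes (TTryS T) = writes T"
| "writes (TApp e1 e2 T) = writes T"
| "writes (TCaseL e T) = writes T"
| "writes (TCaseR e T) = writes T"

primrec toutcome :: "trace \<Rightarrow> outcome" where
  "toutcome (THole k L) = k"
| "toutcome (TReturn e) = OVal"
| "toutcome (TTryS T) = OVal"
| "toutcome (TRef l e) = OVal"
| "toutcome (TAssign e1 l e2) = OVal"
| "toutcome (TDeref l e) = OVal"
| "toutcome (TLetF T) = OExn"
| "toutcome (TRaise e) = OExn"
| "toutcome (TLetS T1 T2) = toutcome T2"
| "toutcome (TTryF T1 T2) = toutcome T2"
| "toutcome (TApp e1 e2 T) = toutcome T"
| "toutcome (TCaseL e T) = toutcome T"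
| "toutcome (TCaseR e T) = toutcome T"

inductive le_exp :: "exp \<Rightarrow> exp \<Rightarrow> bool" and le_comp :: "comp \<Rightarrow> comp \<Rightarrow> bool" where
  "le_exp EHole e"
| "le_exp (EVar x) (EVar x)"
| "le_exp EUnit EUnit"
| "le_exp e e' \<Longrightarrow> le_exp (EInl e) (EInl e')"
| "le_exp e e' \<Longrightarrow> le_exp (EInr e) (EInr e')"
| "le_exp e1 e1' \<Longrightarrow> le_exp e2 e2' \<Longrightarrow> le_exp (EPair e1 e2) (EPair e1' e2')"
| "le_exp e e' \<Longrightarrow> le_exp (EFst e) (EFst e')"
| "le_exp e e' \<Longrightarrow> le_exp (ESnd e) (ESnd e')"
| "le_comp M M' \<Longrightarrow> le_exp (EFun M) (EFun M')"
| "le_comp CHole M"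
| "le_exp e e' \<Longrightarrow> le_comp (CReturn e) (CReturn e')"
| "le_comp M1 M1' \<Longrightarrow> le_comp M2 M2' \<Longrightarrow> le_comp (CLet M1 M2) (CLet M1' M2')"
| "le_exp e1 e1' \<Longrightarrow> le_exp e2 e2' \<Longrightarrow> le_comp (CApp e1 e2) (CApp e1' e2')"
| "le_exp e e' \<Longrightarrow> le_comp M1 M1' \<Longrightarrow> le_comp M2 M2' \<Longrightarrow>
     le_comp (CCase e M1 M2) (CCase e' M1' M2')"
| "le_exp e e' \<Longrightarrow> le_comp (CRaise e) (CRaise e')"
| "le_comp M1 M1' \<Longrightarrow> le_comp M2 M2' \<Longrightarrow> le_comp (CTry M1 M2) (CTry M1' M2')"
| "le_exp e e' \<Longrightarrow> le_comp (CRef e) (CRef e')"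
| "le_exp e1 e1' \<Longrightarrow> le_exp e2 e2' \<Longrightarrow> le_comp (CAssign e1 e2) (CAssign e1' e2')"
| "le_exp e e' \<Longrightarrow> le_comp (CDeref e) (CDeref e')"

inductive le_val :: "val \<Rightarrow> val \<Rightarrow> bool" where
  "le_val VHole v"
| "le_val VUnit VUnit"
| "le_val v v' \<Longrightarrow> le_val (VInl v) (VInl v')"
| "le_val v v' \<Longrightarrow> le_val (VInr v) (VInr v')"
| "le_val v1 v1' \<Longrightarrow> le_val v2 v2' \<Longrightarrow> le_val (VPair v1 v2) (VPair v1' v2')"
| "(\<And>i. le_val (\<rho> i) (\<rho>' i)) \<Longrightarrow> le_comp M M' \<Longrightarrow> le_val (VClo \<rho> M) (VClo \<rho>' M')"
| "le_val (VLoc l) (VLoc l)"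

definition le_env :: "env \<Rightarrow> env \<Rightarrow> bool" where
  "le_env \<rho> \<rho>' \<longleftrightarrow> (\<forall>x. le_val (\<rho> x) (\<rho>' x))"

definition le_store :: "store \<Rightarrow> store \<Rightarrow> bool" where
  "le_store \<mu> \<mu>' \<longleftrightarrow> (\<forall>l. le_val (\<mu> l) (\<mu>' l))"

definition le_res :: "res \<Rightarrow> res \<Rightarrow> bool" where
  "le_res R R' \<longleftrightarrow> (\<exists>k v v'. R = Res k v \<and> R' = Res k v' \<and> le_val v v')"

inductive le_trace :: "trace \<Rightarrow> trace \<Rightarrow> bool" where
  "writes T = L \<Longrightarrow> toutcome T = k \<Longrightarrow> le_trace (THole k L) T"
| "le_exp e e' \<Longrightarrow> le_trace (TReturn e) (TReturn e')"
| "le_trace T T' \<Longrightarrow> le_trace (TLetF T) (TLetF T')"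
| "le_trace T1 T1' \<Longrightarrow> le_trace T2 T2' \<Longrightarrow> le_trace (TLetS T1 T2) (TLetS T1' T2')"
| "le_exp e1 e1' \<Longrightarrow> le_exp e2 e2' \<Longrightarrow> le_trace T T' \<Longrightarrow>
     le_trace (TApp e1 e2 T) (TApp e1' e2' T')"
| "le_exp e e' \<Longrightarrow> le_trace T T' \<Longrightarrow> le_trace (TCaseL e T) (TCaseL e' T')"
| "le_exp e e' \<Longrightarrow> le_trace T T' \<Longrightarrow> le_trace (TCaseR e T) (TCaseR e' T')"
| "le_exp e e' \<Longrightarrow> le_trace (TRaise e) (TRaise e')"
| "le_trace T T' \<Longrightarrow> le_trace (TTryS T) (TTryS T')"
| "le_trace T1 T1' \<Longrightarrow> le_trace T2 T2' \<Longrightarrow> le_trace (TTryF T1 T2) (TTryF T1' T2')"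
| "le_exp e e' \<Longrightarrow> le_trace (TRef l e) (TRef l e')"
| "le_exp e1 e1' \<Longrightarrow> le_exp e2 e2' \<Longrightarrow> le_trace (TAssign e1 l e2) (TAssign e1' l e2')"
| "le_exp e e' \<Longrightarrow> le_trace (TDeref l e) (TDeref l e')"

text \<open>Join: \<open>is_join le a b c\<close> says that c is the least upper bound a \<squnion> b w.r.t. le
  (it exists exactly when a and b lie below a common element).\<close>
definition is_join :: "('a \<Rightarrow> 'a \<Rightarrow> bool) \<Rightarrow> 'a \<Rightarrow> 'a \<Rightarrow> 'a \<Rightarrow> bool" where
  "is_join le a b c \<longleftrightarrow> le a c \<and> le b c \<and> (\<forall>d. le a d \<and> le b d \<longrightarrow> le c d)"

section \<open>Evaluation (hole-free)\<close>

inductive eval_exp :: "env \<Rightarrow> exp \<Rightarrow> val \<Rightarrow> bool" where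
  "eval_exp \<rho> (EVar x) (\<rho> x)"
| "eval_exp \<rho> EUnit VUnit"
| "eval_exp \<rho> (EFun M) (VClo \<rho> M)"
| "eval_exp \<rho> e v \<Longrightarrow> eval_exp \<rho> (EInl e) (VInl v)"
| "eval_exp \<rho> e v \<Longrightarrow> eval_exp \<rho> (EInr e) (VInr v)"
| "eval_exp \<rho> e1 v1 \<Longrightarrow> eval_exp \<rho> e2 v2 \<Longrightarrow> eval_exp \<rho> (EPair e1 e2) (VPair v1 v2)"
| "eval_exp \<rho> e (VPair v1 v2) \<Longrightarrow> eval_exp \<rho> (EFst e) v1"
| "eval_exp \<rho> e (VPair v1 v2) \<Longrightarrow> eval_exp \<rho> (ESnd e) v2"

text \<open>\<open>eval T \<rho> \<mu> M \<mu>' R\<close> means  T :: \<rho>, \<mu>, M \<Rightarrow> \<mu>', R.\<close>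
inductive eval :: "trace \<Rightarrow> env \<Rightarrow> store \<Rightarrow> comp \<Rightarrow> store \<Rightarrow> res \<Rightarrow> bool" where
  eval_return: "eval_exp \<rho> e v \<Longrightarrow> eval (TReturn e) \<rho> \<mu> (CReturn e) \<mu> (Res OVal v)"
| eval_app: "eval_exp \<rho> e1 v1 \<Longrightarrow> v1 = VClo \<rho>' M \<Longrightarrow> eval_exp \<rho> e2 v2 \<Longrightarrow>
     eval T (ext (ext \<rho>' v1) v2) \<mu> M \<mu>' R \<Longrightarrow>
     eval (TApp e1 e2 T) \<rho> \<mu> (CApp e1 e2) \<mu>' R"
| eval_raise: "eval_exp \<rho> e v \<Longrightarrow> eval (TRaise e) \<rho> \<mu> (CRaise e) \<mu> (Res OExn v)"
| eval_ref: "eval_exp \<rho> e v \<Longrightarrow> l \<notin> sdom \<mu> \<Longrightarrow>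
     eval (TRef l e) \<rho> \<mu> (CRef e) (\<mu>(l := v)) (Res OVal (VLoc l))"
| eval_assign: "eval_exp \<rho> e1 (VLoc l) \<Longrightarrow> eval_exp \<rho> e2 v \<Longrightarrow>
     eval (TAssign e1 l e2) \<rho> \<mu> (CAssign e1 e2) (\<mu>(l := v)) (Res OVal VUnit)"
| eval_deref: "eval_exp \<rho> e (VLoc l) \<Longrightarrow> l \<in> sdom \<mu> \<Longrightarrow>
     eval (TDeref l e) \<rho> \<mu> (CDeref e) \<mu> (Res OVal (\<mu> l))"
| eval_letS: "eval T1 \<rho> \<mu> M1 \<mu>' (Res OVal v) \<Longrightarrow> eval T2 (ext \<rho> v) \<mu>' M2 \<mu>'' R \<Longrightarrow>
     eval (TLetS T1 T2) \<rho> \<mu> (CLet M1 M2) \<mu>'' R"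
| eval_letF: "eval T \<rho> \<mu> M1 \<mu>' (Res OExn v) \<Longrightarrow>
     eval (TLetF T) \<rho> \<mu> (CLet M1 M2) \<mu>' (Res OExn v)"
| eval_tryF: "eval T1 \<rho> \<mu> M1 \<mu>' (Res OExn v) \<Longrightarrow> eval T2 (ext \<rho> v) \<mu>' M2 \<mu>'' R \<Longrightarrow>
     eval (TTryF T1 T2) \<rho> \<mu> (CTry M1 M2) \<mu>'' R"
| eval_tryS: "eval T1 \<rho> \<mu> M1 \<mu>' (Res OVal v) \<Longrightarrow>
     eval (TTryS T1) \<rho> \<mu> (CTry M1 M2) \<mu>' (Res OVal v)"
| eval_caseL: "eval_exp \<rho> e (VInl v) \<Longrightarrow> eval T (ext \<rho> v) \<mu> M1 \<mu>' R \<Longrightarrow>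
     eval (TCaseL e T) \<rho> \<mu> (CCase e M1 M2) \<mu>' R"
| eval_caseR: "eval_exp \<rho> e (VInr v) \<Longrightarrow> eval T (ext \<rho> v) \<mu> M2 \<mu>' R \<Longrightarrow>
     eval (TCaseR e T) \<rho> \<mu> (CCase e M1 M2) \<mu>' R"

section \<open>Backward slicing\<close>

text \<open>Expression backward slicing \<open>eslice v e \<rho> e'\<close>:  v, e \<searrow> \<rho>, e'.
  The first rule takes priority: all other rules require v \<noteq> \<box>.\<close>
inductive eslice :: "val \<Rightarrow> exp \<Rightarrow> env \<Rightarrow> exp \<Rightarrow> bool" where
  es_hole: "eslice VHole e box EHole"
| es_var: "v \<noteq> VHole \<Longrightarrow> eslice v (EVar x) (box(x := v)) (EVar x)"
| es_fun: "eslice (VClo \<rho> M) (EFun M') \<rho> (EFun M)"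
| es_unit: "eslice VUnit EUnit box EUnit"
| es_inl: "eslice v e \<rho> e' \<Longrightarrow> eslice (VInl v) (EInl e) \<rho> (EInl e')"
| es_inr: "eslice v e \<rho> e' \<Longrightarrow> eslice (VInr v) (EInr e) \<rho> (EInr e')"
| es_pair: "eslice v1 e1 \<rho>1 e1' \<Longrightarrow> eslice v2 e2 \<rho>2 e2' \<Longrightarrow> is_join le_env \<rho>1 \<rho>2 \<rho> \<Longrightarrow>
     eslice (VPair v1 v2) (EPair e1 e2) \<rho> (EPair e1' e2')"
| es_fst: "v \<noteq> VHole \<Longrightarrow> eslice (VPair v VHole) e \<rho> e' \<Longrightarrow> eslice v (EFst e) \<rho> (EFst e')"
| es_snd: "v \<noteq> VHole \<Longrightarrow> eslice (VPair VHole v) e \<rho> e' \<Longrightarrow> eslice v (ESnd e) \<rho> (ESnd e')"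

text \<open>Condition under which rule B-Slice-box applies (it then takes priority).\<close>
definition box_applies :: "store \<Rightarrow> res \<Rightarrow> trace \<Rightarrow> bool" where
  "box_applies \<mu> R T \<longleftrightarrow> res_val R = VHole \<and> erase \<mu> (writes T) = \<mu>"

text \<open>\<open>bslice \<mu> R T \<rho> \<mu>' M U\<close>:  \<mu>, R, T \<searrow> \<rho>, \<mu>', M, U.
  A premise "\<dots> \<searrow> \<rho>[x |-> v], \<dots>" is rendered by slicing to some \<rho>x and reading off
  v = \<rho>x 0 and \<rho> = \<rho>x \<circ> Suc (every environment decomposes uniquely this way);
  for app, \<rho>[f |-> v1][x |-> v2] = \<rho>b gives v2 = \<rho>b 0, v1 = \<rho>b 1, \<rho> = \<rho>b \<circ> (+) 2.\<close>
inductive bslice :: "store \<Rightarrow> res \<Rightarrow> trace \<Rightarrow> env \<Rightarrow> store \<Rightarrow> comp \<Rightarrow> trace \<Rightarrow> bool" where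
  b_box: "erase \<mu> (writes T) = \<mu> \<Longrightarrow>
     bslice \<mu> (Res k VHole) T box \<mu> CHole (THole k (writes T))"
| b_ret: "\<not> box_applies \<mu> (Res OVal v) (TReturn e) \<Longrightarrow> eslice v e \<rho> e' \<Longrightarrow>
     bslice \<mu> (Res OVal v) (TReturn e) \<rho> \<mu> (CReturn e') (TReturn e')"
| b_let: "\<not> box_applies \<mu> R (TLetS T1 T2) \<Longrightarrow>
     bslice \<mu> R T2 \<rho>x \<mu>' M2 U2 \<Longrightarrow>
     bslice \<mu>' (Res OVal (\<rho>x 0)) T1 \<rho>1 \<mu>'' M1 U1 \<Longrightarrow>
     is_join le_env \<rho>1 (\<rho>x \<circ> Suc) \<rho> \<Longrightarrow>
     bslice \<mu> R (TLetS T1 T2) \<rho> \<mu>'' (CLet M1 M2) (TLetS U1 U2)"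
| b_letfail: "\<not> box_applies \<mu> (Res OExn v) (TLetF T1) \<Longrightarrow>
     bslice \<mu> (Res OExn v) T1 \<rho> \<mu>' M1 U1 \<Longrightarrow>
     bslice \<mu> (Res OExn v) (TLetF T1) \<rho> \<mu>' (CLet M1 CHole) (TLetF U1)"
| b_caseL: "\<not> box_applies \<mu> R (TCaseL e T) \<Longrightarrow>
     bslice \<mu> R T \<rho>x \<mu>' M1 U \<Longrightarrow>
     eslice (VInl (\<rho>x 0)) e \<rho>' e' \<Longrightarrow>
     is_join le_env (\<rho>x \<circ> Suc) \<rho>' \<rho>'' \<Longrightarrow>
     bslice \<mu> R (TCaseL e T) \<rho>'' \<mu>' (CCase e' M1 CHole) (TCaseL e' U)"
| b_caseR: "\<not> box_applies \<mu> R (TCaseR e T) \<Longrightarrow>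
     bslice \<mu> R T \<rho>x \<mu>' M2 U \<Longrightarrow>
     eslice (VInr (\<rho>x 0)) e \<rho>' e' \<Longrightarrow>
     is_join le_env (\<rho>x \<circ> Suc) \<rho>' \<rho>'' \<Longrightarrow>
     bslice \<mu> R (TCaseR e T) \<rho>'' \<mu>' (CCase e' CHole M2) (TCaseR e' U)"
| b_app: "\<not> box_applies \<mu> R (TApp e1 e2 T) \<Longrightarrow>
     bslice \<mu> R T \<rho>b \<mu>' M U \<Longrightarrow>
     eslice (\<rho>b 0) e2 \<rho>2 e2' \<Longrightarrow>
     is_join le_val (\<rho>b (Suc 0)) (VClo (\<lambda>i. \<rho>b (Suc (Suc i))) M) vc \<Longrightarrow>
     eslice vc e1 \<rho>1 e1' \<Longrightarrow>
     is_join le_env \<rho>1 \<rho>2 \<rho> \<Longrightarrow>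
     bslice \<mu> R (TApp e1 e2 T) \<rho> \<mu>' (CApp e1' e2') (TApp e1' e2' U)"
| b_raise: "\<not> box_applies \<mu> (Res OExn v) (TRaise e) \<Longrightarrow> eslice v e \<rho> e' \<Longrightarrow>
     bslice \<mu> (Res OExn v) (TRaise e) \<rho> \<mu> (CRaise e') (TRaise e')"
| b_tryfail: "\<not> box_applies \<mu> R (TTryF T1 T2) \<Longrightarrow>
     bslice \<mu> R T2 \<rho>x \<mu>' M2 U2 \<Longrightarrow>
     bslice \<mu>' (Res OExn (\<rho>x 0)) T1 \<rho>2 \<mu>'' M1 U1 \<Longrightarrow>
     is_join le_env (\<rho>x \<circ> Suc) \<rho>2 \<rho> \<Longrightarrow>
     bslice \<mu> R (TTryF T1 T2) \<rho> \<mu>'' (CTry M1 M2) (TTryF U1 U2)"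
| b_try: "\<not> box_applies \<mu> (Res OVal v) (TTryS T1) \<Longrightarrow>
     bslice \<mu> (Res OVal v) T1 \<rho> \<mu>' M1 U1 \<Longrightarrow>
     bslice \<mu> (Res OVal v) (TTryS T1) \<rho> \<mu>' (CTry M1 CHole) (TTryS U1)"
| b_ref: "\<not> box_applies \<mu> (Res OVal v) (TRef l e) \<Longrightarrow> eslice (\<mu> l) e \<rho> e' \<Longrightarrow>
     bslice \<mu> (Res OVal v) (TRef l e) \<rho> (\<mu>(l := VHole)) (CRef e') (TRef l e')"
| b_assign: "\<not> box_applies \<mu> (Res OVal v) (TAssign e1 l e2) \<Longrightarrow>
     eslice (\<mu> l) e2 \<rho>2 e2' \<Longrightarrow> eslice (VLoc l) e1 \<rho>1 e1' \<Longrightarrow>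
     is_join le_env \<rho>1 \<rho>2 \<rho> \<Longrightarrow>
     bslice \<mu> (Res OVal v) (TAssign e1 l e2) \<rho> (\<mu>(l := VHole)) (CAssign e1' e2') (TAssign e1' l e2')"
| b_deref: "\<not> box_applies \<mu> (Res OVal v) (TDeref l e) \<Longrightarrow>
     eslice (VLoc l) e \<rho> e' \<Longrightarrow>
     is_join le_store \<mu> (sbox(l := v)) \<mu>'' \<Longrightarrow>
     bslice \<mu> (Res OVal v) (TDeref l e) \<rho> \<mu>'' (CDeref e') (TDeref l e')"

end

theory Submission
  imports Defs
begin

text \<open>Determinism: B-Slice\<box> takes priority and every other rule is directed by the shape of
  the trace, so two derivations always use the same rule; the remaining freedom lies in the
  joins, which are unique because \<open>\<sqsubseteq>\<close> is antisymmetric.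

  Existence: induction on the evaluation. If B-Slice\<box> applies, the given store is below the
  initial store, because evaluation leaves every location outside \<open>writes T\<close> unchanged.
  Otherwise slice the subtraces in reverse evaluation order; all the partial slices lie below
  the corresponding parts of the original run, so the joins the rules demand exist.\<close>

lemma is_join_unique: "antisymp le \<Longrightarrow> is_join le a b c \<Longrightarrow> is_join le a b c' \<Longrightarrow> c = c'"
  by (simp add: is_join_def antisymp_def)

lemma is_join_least: "is_join le a b c \<Longrightarrow> le a d \<Longrightarrow> le b d \<Longrightarrow> le c d"
  by (simp add: is_join_def)

inductive_cases le_exp_leftE:
  "le_exp (EVar x) d" "le_exp EUnit d" "le_exp (EInl e) d" "le_exp (EInr e) d"
  "le_exp (EPair e1 e2) d" "le_exp (EFst e) d" "le_exp (ESnd e) d" "le_exp (EFun M) d"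
  "le_comp (CReturn e) D" "le_comp (CLet M1 M2) D" "le_comp (CApp e1 e2) D"
  "le_comp (CCase e M1 M2) D" "le_comp (CRaise e) D" "le_comp (CTry M1 M2) D"
  "le_comp (CRef e) D" "le_comp (CAssign e1 e2) D" "le_comp (CDeref e) D"

inductive_cases le_exp_rightE:
  "le_exp d (EVar x)" "le_exp d EUnit" "le_exp d (EInl e)" "le_exp d (EInr e)"
  "le_exp d (EPair e1 e2)" "le_exp d (EFst e)" "le_exp d (ESnd e)" "le_exp d (EFun M)"
  "le_exp d EHole"
  "le_comp D (CReturn e)" "le_comp D (CLet M1 M2)" "le_comp D (CApp e1 e2)"
  "le_comp D (CCase e M1 M2)" "le_comp D (CRaise e)" "le_comp D (CTry M1 M2)"
  "le_comp D (CRef e)" "le_comp D (CAssign e1 e2)" "le_comp D (CDeref e)" "le_comp D CHole"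

lemma le_exp_refl: "le_exp e e" and le_comp_refl: "le_comp M M"
  by (induct e and M) (auto intro: le_exp_le_comp.intros)

lemma le_exp_antisym: "le_exp a b \<Longrightarrow> le_exp b a \<Longrightarrow> a = b"
  and le_comp_antisym: "le_comp A B \<Longrightarrow> le_comp B A \<Longrightarrow> A = B"
  by (induct rule: le_exp_le_comp.inducts) (auto elim!: le_exp_leftE le_exp_rightE)

text \<open>These are least upper bounds only for arguments with a common upper bound; of two
  incompatible arguments the left one wins.\<close>

primrec join_exp :: "exp \<Rightarrow> exp \<Rightarrow> exp" and join_comp :: "comp \<Rightarrow> comp \<Rightarrow> comp" where
  "join_exp EHole = (\<lambda>b. b)"
| "join_exp (EVar x) = (\<lambda>b. EVar x)"
| "join_exp EUnit = (\<lambda>b. EUnit)"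
| "join_exp (EInl a) =
     (\<lambda>b. case b of EInl b' \<Rightarrow> EInl (join_exp a b') | _ \<Rightarrow> EInl a)"
| "join_exp (EInr a) =
     (\<lambda>b. case b of EInr b' \<Rightarrow> EInr (join_exp a b') | _ \<Rightarrow> EInr a)"
| "join_exp (EPair a1 a2) =
     (\<lambda>b. case b of EPair b1 b2 \<Rightarrow> EPair (join_exp a1 b1) (join_exp a2 b2) | _ \<Rightarrow> EPair a1 a2)"
| "join_exp (EFst a) =
     (\<lambda>b. case b of EFst b' \<Rightarrow> EFst (join_exp a b') | _ \<Rightarrow> EFst a)"
| "join_exp (ESnd a) =
     (\<lambda>b. case b of ESnd b' \<Rightarrow> ESnd (join_exp a b') | _ \<Rightarrow> ESnd a)"
| "join_exp (EFun a) =
     (\<lambda>b. case b of EFun b' \<Rightarrow> EFun (join_comp a b') | _ \<Rightarrow> EFun a)"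
| "join_comp CHole = (\<lambda>B. B)"
| "join_comp (CReturn a) =
     (\<lambda>B. case B of CReturn b \<Rightarrow> CReturn (join_exp a b) | _ \<Rightarrow> CReturn a)"
| "join_comp (CLet a1 a2) =
     (\<lambda>B. case B of CLet b1 b2 \<Rightarrow> CLet (join_comp a1 b1) (join_comp a2 b2) | _ \<Rightarrow> CLet a1 a2)"
| "join_comp (CApp a1 a2) =
     (\<lambda>B. case B of CApp b1 b2 \<Rightarrow> CApp (join_exp a1 b1) (join_exp a2 b2) | _ \<Rightarrow> CApp a1 a2)"
| "join_comp (CCase a a1 a2) =
     (\<lambda>B. case B of
        CCase b b1 b2 \<Rightarrow> CCase (join_exp a b) (join_comp a1 b1) (join_comp a2 b2)
      | _ \<Rightarrow> CCase a a1 a2)"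
| "join_comp (CRaise a) =
     (\<lambda>B. case B of CRaise b \<Rightarrow> CRaise (join_exp a b) | _ \<Rightarrow> CRaise a)"
| "join_comp (CTry a1 a2) =
     (\<lambda>B. case B of CTry b1 b2 \<Rightarrow> CTry (join_comp a1 b1) (join_comp a2 b2) | _ \<Rightarrow> CTry a1 a2)"
| "join_comp (CRef a) =
     (\<lambda>B. case B of CRef b \<Rightarrow> CRef (join_exp a b) | _ \<Rightarrow> CRef a)"
| "join_comp (CAssign a1 a2) =
     (\<lambda>B. case B of CAssign b1 b2 \<Rightarrow> CAssign (join_exp a1 b1) (join_exp a2 b2) | _ \<Rightarrow> CAssign a1 a2)"
| "join_comp (CDeref a) =
     (\<lambda>B. case B of CDeref b \<Rightarrow> CDeref (join_exp a b) | _ \<Rightarrow> CDeref a)"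

lemma join_exp_least: "le_exp a d \<Longrightarrow> le_exp b d \<Longrightarrow> le_exp (join_exp a b) d"
  and join_comp_least: "le_comp A D \<Longrightarrow> le_comp B D \<Longrightarrow> le_comp (join_comp A B) D"
  by (induct arbitrary: b and B rule: le_exp_le_comp.inducts)
     ((simp; fail) | (erule le_exp_rightE; simp add: le_exp_le_comp.intros))+

lemma join_exp_upper:
    "le_exp a c \<Longrightarrow> le_exp b c \<Longrightarrow> le_exp a (join_exp a b) \<and> le_exp b (join_exp a b)"
  and join_comp_upper:
    "le_comp A C \<Longrightarrow> le_comp B C \<Longrightarrow> le_comp A (join_comp A B) \<and> le_comp B (join_comp A B)"
  by (induct arbitrary: b and B rule: le_exp_le_comp.inducts)
     ((simp add: le_exp_refl le_comp_refl le_exp_le_comp.intros; fail)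
      | (erule le_exp_rightE; fastforce intro: le_exp_refl le_comp_refl le_exp_le_comp.intros))+

inductive_cases le_val_leftE: "le_val VUnit d" "le_val (VInl v) d" "le_val (VInr v) d"
  "le_val (VPair v1 v2) d" "le_val (VClo r M) d" "le_val (VLoc l) d"
inductive_cases le_val_rightE: "le_val d VUnit" "le_val d (VInl v)" "le_val d (VInr v)"
  "le_val d (VPair v1 v2)" "le_val d (VClo r M)" "le_val d (VLoc l)" "le_val d VHole"

lemma le_val_refl: "le_val v v"
  by (induct v) (auto intro: le_val.intros le_comp_refl)

lemma antisymp_le_val: "antisymp le_val"
proof (rule antisympI)
  show "le_val a b \<Longrightarrow> le_val b a \<Longrightarrow> a = b" for a b
    by (induct rule: le_val.induct)
       (auto elim!: le_val_leftE le_val_rightE intro: le_exp_antisym le_comp_antisym)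
qed

primrec join_val :: "val \<Rightarrow> val \<Rightarrow> val" where
  "join_val VHole = (\<lambda>w. w)"
| "join_val VUnit = (\<lambda>w. VUnit)"
| "join_val (VInl a) =
     (\<lambda>w. case w of VInl b \<Rightarrow> VInl (join_val a b) | _ \<Rightarrow> VInl a)"
| "join_val (VInr a) =
     (\<lambda>w. case w of VInr b \<Rightarrow> VInr (join_val a b) | _ \<Rightarrow> VInr a)"
| "join_val (VPair a1 a2) =
     (\<lambda>w. case w of VPair b1 b2 \<Rightarrow> VPair (join_val a1 b1) (join_val a2 b2) | _ \<Rightarrow> VPair a1 a2)"
| "join_val (VClo r M) =
     (\<lambda>w. case w of VClo r' M' \<Rightarrow> VClo (\<lambda>i. join_val (r i) (r' i)) (join_comp M M') | _ \<Rightarrow> VClo r M)"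
| "join_val (VLoc l) = (\<lambda>w. VLoc l)"

lemma join_val_least: "le_val a d \<Longrightarrow> le_val b d \<Longrightarrow> le_val (join_val a b) d"
  by (induct arbitrary: b rule: le_val.induct)
     ((simp; fail) | (erule le_val_rightE; simp add: le_val.intros join_comp_least))+

lemma join_val_upper: "le_val a c \<Longrightarrow> le_val b c \<Longrightarrow> le_val a (join_val a b) \<and> le_val b (join_val a b)"
  by (induct arbitrary: b rule: le_val.induct)
     ((simp add: le_val_refl le_val.intros; fail)
      | (erule le_val_rightE; auto intro!: le_val.intros le_val_refl dest: join_comp_upper))+

lemma is_join_join_val: "le_val a c \<Longrightarrow> le_val b c \<Longrightarrow> is_join le_val a b (join_val a b)"
  by (simp add: is_join_def join_val_upper join_val_least)

lemma le_store_eq_le_env: "le_store = le_env"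
  by (simp add: fun_eq_iff le_store_def le_env_def)

lemma antisymp_le_env: "antisymp le_env"
  using antisymp_le_val by (auto simp: antisymp_def le_env_def)

lemma antisymp_le_store: "antisymp le_store"
  by (simp add: le_store_eq_le_env antisymp_le_env)

definition pointwise_join :: "(nat \<Rightarrow> val) \<Rightarrow> (nat \<Rightarrow> val) \<Rightarrow> nat \<Rightarrow> val" where
  "pointwise_join a b = (\<lambda>x. join_val (a x) (b x))"

lemma is_join_pointwise_join:
  "le_env a c \<Longrightarrow> le_env b c \<Longrightarrow> is_join le_env a b (pointwise_join a b)"
  unfolding is_join_def le_env_def pointwise_join_def using join_val_upper join_val_least by blast

lemma is_join_pointwise_join_store:
  "le_store a c \<Longrightarrow> le_store b c \<Longrightarrow> is_join le_store a b (pointwise_join a b)"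
  by (simp add: le_store_eq_le_env is_join_pointwise_join)

inductive_cases eslice_elims:
  "eslice VHole e \<rho> e'" "eslice v (EVar x) \<rho> e'" "eslice v (EFun M) \<rho> e'" "eslice v EUnit \<rho> e'"
  "eslice v (EInl e) \<rho> e'" "eslice v (EInr e) \<rho> e'" "eslice v (EPair e1 e2) \<rho> e'"
  "eslice v (EFst e) \<rho> e'" "eslice v (ESnd e) \<rho> e'"

lemma eslice_deterministic: "eslice v e \<rho> e' \<Longrightarrow> eslice v e \<rho>2 e2 \<Longrightarrow> \<rho> = \<rho>2 \<and> e' = e2"
proof (induct arbitrary: \<rho>2 e2 rule: eslice.induct)
  case (es_hole e)
  then show ?case by (rule eslice_elims(1)) simp
next
  case (es_var v x)
  then show ?case by (auto elim: eslice_elims(2))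
next
  case (es_fun \<rho> M M')
  then show ?case by (auto elim: eslice_elims(3))
next
  case es_unit
  then show ?case by (auto elim: eslice_elims(4))
next
  case (es_inl v e \<rho> e')
  from es_inl.prems show ?case by (rule eslice_elims(5)) (auto dest: es_inl.hyps(2))
next
  case (es_inr v e \<rho> e')
  from es_inr.prems show ?case by (rule eslice_elims(6)) (auto dest: es_inr.hyps(2))
next
  case (es_pair v1 e1 \<rho>1 e1' v2 e2 \<rho>2' e2' \<rho>)
  from es_pair.prems show ?case
    by (rule eslice_elims(7)) (use es_pair.hyps is_join_unique[OF antisymp_le_env] in blast)+
next
  case (es_fst v e \<rho> e')
  from es_fst.prems show ?case
    by (rule eslice_elims(8)) (auto simp: es_fst.hyps(1) dest: es_fst.hyps(3))
next
  case (es_snd v e \<rho> e')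
  from es_snd.prems show ?case
    by (rule eslice_elims(9)) (auto simp: es_snd.hyps(1) dest: es_snd.hyps(3))
qed

inductive_cases bslice_elims:
  "bslice \<mu> R (TReturn e) \<rho> \<mu>' M U"
  "bslice \<mu> R (TLetF T1) \<rho> \<mu>' M U"
  "bslice \<mu> R (TLetS T1 T2) \<rho> \<mu>' M U"
  "bslice \<mu> R (TApp e1 e2 T) \<rho> \<mu>' M U"
  "bslice \<mu> R (TCaseL e T) \<rho> \<mu>' M U"
  "bslice \<mu> R (TCaseR e T) \<rho> \<mu>' M U"
  "bslice \<mu> R (TRaise e) \<rho> \<mu>' M U"
  "bslice \<mu> R (TTryS T) \<rho> \<mu>' M U"
  "bslice \<mu> R (TTryF T1 T2) \<rho> \<mu>' M U"
  "bslice \<mu> R (TRef l e) \<rho> \<mu>' M U"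
  "bslice \<mu> R (TAssign e1 l e2) \<rho> \<mu>' M U"
  "bslice \<mu> R (TDeref l e) \<rho> \<mu>' M U"

lemma bslice_deterministic:
  "bslice \<mu> R T \<rho> \<mu>' M U \<Longrightarrow> bslice \<mu> R T \<rho>2 \<mu>2 M2 U2 \<Longrightarrow>
   \<rho> = \<rho>2 \<and> \<mu>' = \<mu>2 \<and> M = M2 \<and> U = U2"
proof (induct arbitrary: \<rho>2 \<mu>2 M2 U2 rule: bslice.induct)
  case b_box
  from b_box.prems show ?case
    by (cases rule: bslice.cases) (use b_box.hyps in \<open>auto simp: box_applies_def\<close>)
next
  case b_ret
  from b_ret.prems show ?case
    by (rule bslice_elims(1))
       (use b_ret.hyps(1) in \<open>auto simp: box_applies_def
          dest!: eslice_deterministic[OF b_ret.hyps(2)]\<close>)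
next
  case b_let
  from b_let.prems show ?case
    by (rule bslice_elims(3))
       (use b_let.hyps(1) in \<open>auto simp: box_applies_def
          dest!: b_let.hyps(3,5) is_join_unique[OF antisymp_le_env b_let.hyps(6)]\<close>)
next
  case b_letfail
  from b_letfail.prems show ?case
    by (rule bslice_elims(2))
       (use b_letfail.hyps(1) in \<open>auto simp: box_applies_def
          dest!: b_letfail.hyps(3)\<close>)
next
  case b_caseL
  from b_caseL.prems show ?case
    by (rule bslice_elims(5))
       (use b_caseL.hyps(1) in \<open>auto simp: box_applies_def
          dest!: b_caseL.hyps(3) eslice_deterministic[OF b_caseL.hyps(4)]
            is_join_unique[OF antisymp_le_env b_caseL.hyps(5)]\<close>)
next
  case b_caseR
  from b_caseR.prems show ?case
    by (rule bslice_elims(6))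
       (use b_caseR.hyps(1) in \<open>auto simp: box_applies_def
          dest!: b_caseR.hyps(3) eslice_deterministic[OF b_caseR.hyps(4)]
            is_join_unique[OF antisymp_le_env b_caseR.hyps(5)]\<close>)
next
  case b_app
  from b_app.prems show ?case
    by (rule bslice_elims(4))
       (use b_app.hyps(1) in \<open>auto simp: box_applies_def
          dest!: b_app.hyps(3) eslice_deterministic[OF b_app.hyps(4)]
            eslice_deterministic[OF b_app.hyps(6)] is_join_unique[OF antisymp_le_val b_app.hyps(5)]
            is_join_unique[OF antisymp_le_env b_app.hyps(7)]\<close>)
next
  case b_raise
  from b_raise.prems show ?case
    by (rule bslice_elims(7))
       (use b_raise.hyps(1) in \<open>auto simp: box_applies_def
          dest!: eslice_deterministic[OF b_raise.hyps(2)]\<close>)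
next
  case b_tryfail
  from b_tryfail.prems show ?case
    by (rule bslice_elims(9))
       (use b_tryfail.hyps(1) in \<open>auto simp: box_applies_def
          dest!: b_tryfail.hyps(3,5) is_join_unique[OF antisymp_le_env b_tryfail.hyps(6)]\<close>)
next
  case b_try
  from b_try.prems show ?case
    by (rule bslice_elims(8))
       (use b_try.hyps(1) in \<open>auto simp: box_applies_def
          dest!: b_try.hyps(3)\<close>)
next
  case b_ref
  from b_ref.prems show ?case
    by (rule bslice_elims(10))
       (use b_ref.hyps(1) in \<open>auto simp: box_applies_def
          dest!: eslice_deterministic[OF b_ref.hyps(2)]\<close>)
next
  case b_assign
  from b_assign.prems show ?case
    by (rule bslice_elims(11))
       (use b_assign.hyps(1) in \<open>auto simp: box_applies_def
          dest!: eslice_deterministic[OF b_assign.hyps(2)] eslice_deterministic[OF b_assign.hyps(3)]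
            is_join_unique[OF antisymp_le_env b_assign.hyps(4)]\<close>)
next
  case b_deref
  from b_deref.prems show ?case
    by (rule bslice_elims(12))
       (use b_deref.hyps(1) in \<open>auto simp: box_applies_def
          dest!: eslice_deterministic[OF b_deref.hyps(2)]
            is_join_unique[OF antisymp_le_store b_deref.hyps(3)]\<close>)
qed

lemma le_env_box: "le_env box \<rho>"
  by (simp add: le_env_def box_def le_val.intros)

lemma eslice_hole_below: "eslice VHole e box EHole \<and> le_env box \<rho> \<and> le_exp EHole e"
  by (simp add: es_hole le_env_box le_exp_le_comp.intros)

lemma eslice_exists:
  "eval_exp \<rho> e w \<Longrightarrow> le_val v w \<Longrightarrow> \<exists>\<rho>' e'. eslice v e \<rho>' e' \<and> le_env \<rho>' \<rho> \<and> le_exp e' e"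
proof (induct arbitrary: v rule: eval_exp.induct)
  case (1 \<rho> x)
  show ?case
  proof (cases "v = VHole")
    case True
    then show ?thesis using eslice_hole_below by blast
  next
    case False
    have "le_env (box(x := v)) \<rho>" using 1 by (simp add: le_env_def box_def le_val.intros)
    with False show ?thesis by (blast intro: es_var le_exp_le_comp.intros)
  qed
next
  case (6 \<rho> e1 w1 e2 w2)
  show ?case
  proof (cases "v = VHole")
    case True
    then show ?thesis using eslice_hole_below by blast
  next
    case False
    then obtain v1 v2 where v: "v = VPair v1 v2" "le_val v1 w1" "le_val v2 w2"
      using 6(5) by (auto elim: le_val_rightE)
    obtain \<rho>1 e1' where 1: "eslice v1 e1 \<rho>1 e1'" "le_env \<rho>1 \<rho>" "le_exp e1' e1" using 6(2) v by blast
    obtain \<rho>2 e2' where 2: "eslice v2 e2 \<rho>2 e2'" "le_env \<rho>2 \<rho>" "le_exp e2' e2" using 6(4) v by blast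
    note join = is_join_pointwise_join[OF 1(2) 2(2)]
    show ?thesis
      using es_pair[OF 1(1) 2(1) join] is_join_least[OF join, of \<rho>] 1(2) 2(2) 1(3) 2(3) v(1)
      by (blast intro: le_exp_le_comp.intros)
  qed
next
  case (7 \<rho> e v1 v2)
  then show ?case
    using eslice_hole_below
    by (cases "v = VHole") (blast, blast intro: es_fst le_exp_le_comp.intros le_val.intros)
next
  case (8 \<rho> e v1 v2)
  then show ?case
    using eslice_hole_below
    by (cases "v = VHole") (blast, blast intro: es_snd le_exp_le_comp.intros le_val.intros)
qed (use eslice_hole_below in \<open>blast elim: le_val_rightE
       intro: es_unit es_fun es_inl es_inr le_exp_le_comp.intros le_env_def[THEN iffD2]\<close>)+

lemma eval_result_outcome: "eval T \<rho> \<mu> M \<mu>' R \<Longrightarrow> \<exists>v. R = Res (toutcome T) v"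
  by (induct rule: eval.induct) auto

lemma eval_unwritten: "eval T \<rho> \<mu> M \<mu>' R \<Longrightarrow> l |\<notin>| writes T \<Longrightarrow> \<mu>' l = \<mu> l"
  by (induct rule: eval.induct) auto

lemma le_resE:
  assumes "le_res R (Res k v)"
  obtains w where "R = Res k w" "le_val w v"
  using assms by (auto simp: le_res_def)

lemma ext_simps [simp]: "ext \<rho> v 0 = v" "ext \<rho> v (Suc i) = \<rho> i"
  by (simp_all add: ext_def)

lemma le_env_ext: "le_env \<rho> (ext \<rho>' v) \<Longrightarrow> le_val (\<rho> 0) v \<and> le_env (\<rho> \<circ> Suc) \<rho>'"
  unfolding le_env_def by (metis comp_apply ext_simps)

lemma le_store_upd: "le_store \<mu> (\<nu>(l := v)) \<Longrightarrow> le_store (\<mu>(l := VHole)) \<nu> \<and> le_val (\<mu> l) v"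
  unfolding le_store_def by (metis fun_upd_apply le_val.intros(1))

definition has_slice_below :: "store \<Rightarrow> res \<Rightarrow> trace \<Rightarrow> env \<Rightarrow> store \<Rightarrow> comp \<Rightarrow> bool" where
  "has_slice_below \<mu> R T \<rho>' \<nu> M' \<longleftrightarrow>
     (\<exists>\<rho> \<mu>' M U. le_env \<rho> \<rho>' \<and> le_store \<mu>' \<nu> \<and> le_comp M M' \<and> le_trace U T \<and> bslice \<mu> R T \<rho> \<mu>' M U)"

text \<open>\<open>slices_below T \<rho>' \<nu> M' \<nu>' R'\<close> is part (2) of the theorem for the single evaluation
  \<open>T :: \<rho>', \<nu>, M' \<Rightarrow> \<nu>', R'\<close>.\<close>

definition slices_below :: "trace \<Rightarrow> env \<Rightarrow> store \<Rightarrow> comp \<Rightarrow> store \<Rightarrow> res \<Rightarrow> bool" where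
  "slices_below T \<rho>' \<nu> M' \<nu>' R' \<longleftrightarrow>
     (\<forall>\<mu> R. le_store \<mu> \<nu>' \<longrightarrow> le_res R R' \<longrightarrow> has_slice_below \<mu> R T \<rho>' \<nu> M')"

lemma has_slice_belowI:
  "bslice \<mu> R T \<rho> \<mu>' M U \<Longrightarrow> le_env \<rho> \<rho>' \<Longrightarrow> le_store \<mu>' \<nu> \<Longrightarrow> le_comp M M' \<Longrightarrow> le_trace U T \<Longrightarrow>
   has_slice_below \<mu> R T \<rho>' \<nu> M'"
  unfolding has_slice_below_def by blast

lemma slices_belowE:
  assumes "slices_below T \<rho>' \<nu> M' \<nu>' R'" "le_store \<mu> \<nu>'" "le_res R R'"
  obtains \<rho> \<mu>' M U
  where "le_env \<rho> \<rho>'" "le_store \<mu>' \<nu>" "le_comp M M'" "le_trace U T" "bslice \<mu> R T \<rho> \<mu>' M U"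
  using assms unfolding slices_below_def has_slice_below_def by blast

lemma has_slice_below_box:
  assumes eval: "eval T \<rho>' \<nu> M' \<nu>' R'" and \<mu>: "le_store \<mu> \<nu>'" and R: "le_res R R'"
    and box: "box_applies \<mu> R T"
  shows "has_slice_below \<mu> R T \<rho>' \<nu> M'"
proof -
  have "R = Res (toutcome T) VHole"
    using eval_result_outcome[OF eval] R box by (auto simp: le_res_def box_applies_def)
  moreover have erased: "erase \<mu> (writes T) = \<mu>"
    using box by (simp add: box_applies_def)
  moreover have "le_store \<mu> \<nu>"
    unfolding le_store_def
  proof
    fix l
    show "le_val (\<mu> l) (\<nu> l)"
    proof (cases "l |\<in>| writes T")
      case True
      then show ?thesis using erased by (metis erase_def le_val.intros(1))
    next
      case False
      then show ?thesis using \<mu> eval_unwritten[OF eval False] by (metis le_store_def)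
    qed
  qed
  ultimately show ?thesis
    by (auto intro!: has_slice_belowI b_box le_trace.intros le_env_box le_exp_le_comp.intros)
qed

lemma slices_below_if_non_box:
  assumes "eval T \<rho>' \<nu> M' \<nu>' R'"
    and "\<And>\<mu> R. le_store \<mu> \<nu>' \<Longrightarrow> le_res R R' \<Longrightarrow> \<not> box_applies \<mu> R T \<Longrightarrow> has_slice_below \<mu> R T \<rho>' \<nu> M'"
  shows "slices_below T \<rho>' \<nu> M' \<nu>' R'"
  using assms has_slice_below_box unfolding slices_below_def by blast

lemma slices_below_return:
  assumes e: "eval_exp \<rho>' e v"
  shows "slices_below (TReturn e) \<rho>' \<nu> (CReturn e) \<nu> (Res OVal v)"
proof (rule slices_below_if_non_box[OF eval_return[OF e]], goal_cases)
  case (1 \<mu> R)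
  obtain w where R: "R = Res OVal w" "le_val w v" using 1(2) by (rule le_resE)
  obtain \<rho> e' where e': "eslice w e \<rho> e'" "le_env \<rho> \<rho>'" "le_exp e' e"
    using eslice_exists[OF e R(2)] by blast
  have "bslice \<mu> R (TReturn e) \<rho> \<mu> (CReturn e') (TReturn e')"
    using b_ret 1(3) e'(1) by (simp add: R)
  then show ?case
    using 1(1) e' by (blast intro: has_slice_belowI le_exp_le_comp.intros le_trace.intros)
qed

lemma slices_below_raise:
  assumes e: "eval_exp \<rho>' e v"
  shows "slices_below (TRaise e) \<rho>' \<nu> (CRaise e) \<nu> (Res OExn v)"
proof (rule slices_below_if_non_box[OF eval_raise[OF e]], goal_cases)
  case (1 \<mu> R)
  obtain w where R: "R = Res OExn w" "le_val w v" using 1(2) by (rule le_resE)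
  obtain \<rho> e' where e': "eslice w e \<rho> e'" "le_env \<rho> \<rho>'" "le_exp e' e"
    using eslice_exists[OF e R(2)] by blast
  have "bslice \<mu> R (TRaise e) \<rho> \<mu> (CRaise e') (TRaise e')"
    using b_raise 1(3) e'(1) by (simp add: R)
  then show ?case
    using 1(1) e' by (blast intro: has_slice_belowI le_exp_le_comp.intros le_trace.intros)
qed

lemma slices_below_ref:
  assumes e: "eval_exp \<rho>' e v" and fresh: "l \<notin> sdom \<nu>"
  shows "slices_below (TRef l e) \<rho>' \<nu> (CRef e) (\<nu>(l := v)) (Res OVal (VLoc l))"
proof (rule slices_below_if_non_box[OF eval_ref[OF e fresh]], goal_cases)
  case (1 \<mu> R)
  obtain w where R: "R = Res OVal w" using 1(2) by (rule le_resE)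
  have \<mu>: "le_store (\<mu>(l := VHole)) \<nu>" "le_val (\<mu> l) v" using le_store_upd 1(1) by blast+
  obtain \<rho> e' where e': "eslice (\<mu> l) e \<rho> e'" "le_env \<rho> \<rho>'" "le_exp e' e"
    using eslice_exists[OF e \<mu>(2)] by blast
  have "bslice \<mu> R (TRef l e) \<rho> (\<mu>(l := VHole)) (CRef e') (TRef l e')"
    using b_ref 1(3) e'(1) by (simp add: R)
  then show ?case
    using \<mu> e' by (blast intro: has_slice_belowI le_exp_le_comp.intros le_trace.intros)
qed

lemma slices_below_assign:
  assumes e1: "eval_exp \<rho>' e1 (VLoc l)" and e2: "eval_exp \<rho>' e2 v"
  shows "slices_below (TAssign e1 l e2) \<rho>' \<nu> (CAssign e1 e2) (\<nu>(l := v)) (Res OVal VUnit)"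
proof (rule slices_below_if_non_box[OF eval_assign[OF e1 e2]], goal_cases)
  case (1 \<mu> R)
  obtain w where R: "R = Res OVal w" using 1(2) by (rule le_resE)
  have \<mu>: "le_store (\<mu>(l := VHole)) \<nu>" "le_val (\<mu> l) v" using le_store_upd 1(1) by blast+
  obtain \<rho>2 e2' where s2: "eslice (\<mu> l) e2 \<rho>2 e2'" "le_env \<rho>2 \<rho>'" "le_exp e2' e2"
    using eslice_exists[OF e2 \<mu>(2)] by blast
  obtain \<rho>1 e1' where s1: "eslice (VLoc l) e1 \<rho>1 e1'" "le_env \<rho>1 \<rho>'" "le_exp e1' e1"
    using eslice_exists[OF e1 le_val_refl] by blast
  note join = is_join_pointwise_join[OF s1(2) s2(2)]
  have "bslice \<mu> R (TAssign e1 l e2) (pointwise_join \<rho>1 \<rho>2) (\<mu>(l := VHole)) (CAssign e1' e2')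
          (TAssign e1' l e2')"
    using b_assign[where \<mu> = \<mu> and l = l, OF _ s2(1) s1(1) join] 1(3) by (simp add: R)
  then show ?case
    using \<mu> s1 s2 is_join_least[OF join, of \<rho>']
    by (blast intro: has_slice_belowI le_exp_le_comp.intros le_trace.intros)
qed

lemma slices_below_deref:
  assumes e: "eval_exp \<rho>' e (VLoc l)" and l: "l \<in> sdom \<nu>"
  shows "slices_below (TDeref l e) \<rho>' \<nu> (CDeref e) \<nu> (Res OVal (\<nu> l))"
proof (rule slices_below_if_non_box[OF eval_deref[OF e l]], goal_cases)
  case (1 \<mu> R)
  obtain w where R: "R = Res OVal w" "le_val w (\<nu> l)" using 1(2) by (rule le_resE)
  obtain \<rho> e' where e': "eslice (VLoc l) e \<rho> e'" "le_env \<rho> \<rho>'" "le_exp e' e"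
    using eslice_exists[OF e le_val_refl] by blast
  have "le_store (sbox(l := w)) \<nu>"
    using R(2) by (simp add: le_store_def sbox_def le_val.intros)
  note join = is_join_pointwise_join_store[OF 1(1) this]
  have "bslice \<mu> R (TDeref l e) \<rho> (pointwise_join \<mu> (sbox(l := w))) (CDeref e') (TDeref l e')"
    using b_deref[OF _ e'(1) join] 1(3) by (simp add: R)
  then show ?case
    using e' is_join_least[OF join, of \<nu>] 1(1) \<open>le_store (sbox(l := w)) \<nu>\<close>
    by (blast intro: has_slice_belowI le_exp_le_comp.intros le_trace.intros)
qed

lemma slices_below_letF:
  assumes "eval T \<rho>' \<nu> M1 \<nu>' (Res OExn v)" and IH: "slices_below T \<rho>' \<nu> M1 \<nu>' (Res OExn v)"
  shows "slices_below (TLetF T) \<rho>' \<nu> (CLet M1 M2) \<nu>' (Res OExn v)"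
proof (rule slices_below_if_non_box[OF eval_letF[OF assms(1)]], goal_cases)
  case (1 \<mu> R)
  obtain w where R: "R = Res OExn w" using 1(2) by (rule le_resE)
  obtain \<rho> \<mu>' N V where "le_env \<rho> \<rho>'" "le_store \<mu>' \<nu>" "le_comp N M1" "le_trace V T"
    and slice: "bslice \<mu> R T \<rho> \<mu>' N V"
    using IH 1(1,2) by (rule slices_belowE)
  moreover have "bslice \<mu> R (TLetF T) \<rho> \<mu>' (CLet N CHole) (TLetF V)"
    using b_letfail 1(3) slice by (simp add: R)
  ultimately show ?case by (blast intro: has_slice_belowI le_exp_le_comp.intros le_trace.intros)
qed

lemma slices_below_tryS:
  assumes "eval T \<rho>' \<nu> M1 \<nu>' (Res OVal v)" and IH: "slices_below T \<rho>' \<nu> M1 \<nu>' (Res OVal v)"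
  shows "slices_below (TTryS T) \<rho>' \<nu> (CTry M1 M2) \<nu>' (Res OVal v)"
proof (rule slices_below_if_non_box[OF eval_tryS[OF assms(1)]], goal_cases)
  case (1 \<mu> R)
  obtain w where R: "R = Res OVal w" using 1(2) by (rule le_resE)
  obtain \<rho> \<mu>' N V where "le_env \<rho> \<rho>'" "le_store \<mu>' \<nu>" "le_comp N M1" "le_trace V T"
    and slice: "bslice \<mu> R T \<rho> \<mu>' N V"
    using IH 1(1,2) by (rule slices_belowE)
  moreover have "bslice \<mu> R (TTryS T) \<rho> \<mu>' (CTry N CHole) (TTryS V)"
    using b_try 1(3) slice by (simp add: R)
  ultimately show ?case by (blast intro: has_slice_belowI le_exp_le_comp.intros le_trace.intros)
qed

lemma slices_below_letS:
  assumes "eval T1 \<rho>' \<nu> M1 \<nu>1 (Res OVal v)" and IH1: "slices_below T1 \<rho>' \<nu> M1 \<nu>1 (Res OVal v)"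
    and "eval T2 (ext \<rho>' v) \<nu>1 M2 \<nu>2 R'" and IH2: "slices_below T2 (ext \<rho>' v) \<nu>1 M2 \<nu>2 R'"
  shows "slices_below (TLetS T1 T2) \<rho>' \<nu> (CLet M1 M2) \<nu>2 R'"
proof (rule slices_below_if_non_box[OF eval_letS[OF assms(1,3)]], goal_cases)
  case (1 \<mu> R)
  obtain \<rho>x \<mu>1 N2 V2 where \<rho>x: "le_env \<rho>x (ext \<rho>' v)" and "le_comp N2 M2" "le_trace V2 T2"
    and \<mu>1: "le_store \<mu>1 \<nu>1" and slice2: "bslice \<mu> R T2 \<rho>x \<mu>1 N2 V2"
    using IH2 1(1,2) by (rule slices_belowE)
  have x: "le_val (\<rho>x 0) v" "le_env (\<rho>x \<circ> Suc) \<rho>'" using le_env_ext[OF \<rho>x] by blast+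
  then have "le_res (Res OVal (\<rho>x 0)) (Res OVal v)" by (simp add: le_res_def)
  then obtain \<rho>1 \<mu>2 N1 V1 where \<rho>1: "le_env \<rho>1 \<rho>'" and "le_store \<mu>2 \<nu>" "le_comp N1 M1"
    "le_trace V1 T1" and slice1: "bslice \<mu>1 (Res OVal (\<rho>x 0)) T1 \<rho>1 \<mu>2 N1 V1"
    by (rule slices_belowE[OF IH1 \<mu>1])
  note join = is_join_pointwise_join[OF \<rho>1 x(2)]
  have "bslice \<mu> R (TLetS T1 T2) (pointwise_join \<rho>1 (\<rho>x \<circ> Suc)) \<mu>2 (CLet N1 N2) (TLetS V1 V2)"
    using 1(3) slice2 slice1 join by (rule b_let)
  then show ?case
    using is_join_least[OF join, of \<rho>'] \<rho>1 x(2) \<open>le_store \<mu>2 \<nu>\<close> \<open>le_comp N1 M1\<close> \<open>le_comp N2 M2\<close>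
      \<open>le_trace V1 T1\<close> \<open>le_trace V2 T2\<close>
    by (blast intro: has_slice_belowI le_exp_le_comp.intros le_trace.intros)
qed

lemma slices_below_tryF:
  assumes "eval T1 \<rho>' \<nu> M1 \<nu>1 (Res OExn v)" and IH1: "slices_below T1 \<rho>' \<nu> M1 \<nu>1 (Res OExn v)"
    and "eval T2 (ext \<rho>' v) \<nu>1 M2 \<nu>2 R'" and IH2: "slices_below T2 (ext \<rho>' v) \<nu>1 M2 \<nu>2 R'"
  shows "slices_below (TTryF T1 T2) \<rho>' \<nu> (CTry M1 M2) \<nu>2 R'"
proof (rule slices_below_if_non_box[OF eval_tryF[OF assms(1,3)]], goal_cases)
  case (1 \<mu> R)
  obtain \<rho>x \<mu>1 N2 V2 where \<rho>x: "le_env \<rho>x (ext \<rho>' v)" and N2: "le_comp N2 M2" "le_trace V2 T2"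
    and \<mu>1: "le_store \<mu>1 \<nu>1" and slice2: "bslice \<mu> R T2 \<rho>x \<mu>1 N2 V2"
    using IH2 1(1,2) by (rule slices_belowE)
  have x: "le_val (\<rho>x 0) v" "le_env (\<rho>x \<circ> Suc) \<rho>'" using le_env_ext[OF \<rho>x] by blast+
  then have "le_res (Res OExn (\<rho>x 0)) (Res OExn v)" by (simp add: le_res_def)
  then obtain \<rho>1 \<mu>2 N1 V1 where \<rho>1: "le_env \<rho>1 \<rho>'" and N1: "le_store \<mu>2 \<nu>" "le_comp N1 M1"
    "le_trace V1 T1" and slice1: "bslice \<mu>1 (Res OExn (\<rho>x 0)) T1 \<rho>1 \<mu>2 N1 V1"
    by (rule slices_belowE[OF IH1 \<mu>1])
  note join = is_join_pointwise_join[OF x(2) \<rho>1]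
  have "bslice \<mu> R (TTryF T1 T2) (pointwise_join (\<rho>x \<circ> Suc) \<rho>1) \<mu>2 (CTry N1 N2) (TTryF V1 V2)"
    using 1(3) slice2 slice1 join by (rule b_tryfail)
  then show ?case
    using is_join_least[OF join, of \<rho>'] \<rho>1 x(2) N1 N2
    by (blast intro: has_slice_belowI le_exp_le_comp.intros le_trace.intros)
qed

lemma slices_below_caseL:
  assumes e: "eval_exp \<rho>' e (VInl v)"
    and "eval T (ext \<rho>' v) \<nu> M1 \<nu>' R'" and IH: "slices_below T (ext \<rho>' v) \<nu> M1 \<nu>' R'"
  shows "slices_below (TCaseL e T) \<rho>' \<nu> (CCase e M1 M2) \<nu>' R'"
proof (rule slices_below_if_non_box[OF eval_caseL[OF assms(1,2)]], goal_cases)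
  case (1 \<mu> R)
  obtain \<rho>x \<mu>' N V where \<rho>x: "le_env \<rho>x (ext \<rho>' v)" and N: "le_store \<mu>' \<nu>" "le_comp N M1"
    "le_trace V T" and slice: "bslice \<mu> R T \<rho>x \<mu>' N V"
    using IH 1(1,2) by (rule slices_belowE)
  have x: "le_val (\<rho>x 0) v" "le_env (\<rho>x \<circ> Suc) \<rho>'" using le_env_ext[OF \<rho>x] by blast+
  have "le_val (VInl (\<rho>x 0)) (VInl v)" using x(1) by (rule le_val.intros)
  then obtain \<rho>e e' where e': "eslice (VInl (\<rho>x 0)) e \<rho>e e'" "le_env \<rho>e \<rho>'" "le_exp e' e"
    using eslice_exists[OF e] by blast
  note join = is_join_pointwise_join[OF x(2) e'(2)]
  have "bslice \<mu> R (TCaseL e T) (pointwise_join (\<rho>x \<circ> Suc) \<rho>e) \<mu>' (CCase e' N CHole) (TCaseL e' V)"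
    using 1(3) slice e'(1) join by (rule b_caseL)
  then show ?case
    using is_join_least[OF join, of \<rho>'] x(2) e' N
    by (blast intro: has_slice_belowI le_exp_le_comp.intros le_trace.intros)
qed

lemma slices_below_caseR:
  assumes e: "eval_exp \<rho>' e (VInr v)"
    and "eval T (ext \<rho>' v) \<nu> M2 \<nu>' R'" and IH: "slices_below T (ext \<rho>' v) \<nu> M2 \<nu>' R'"
  shows "slices_below (TCaseR e T) \<rho>' \<nu> (CCase e M1 M2) \<nu>' R'"
proof (rule slices_below_if_non_box[OF eval_caseR[OF assms(1,2)]], goal_cases)
  case (1 \<mu> R)
  obtain \<rho>x \<mu>' N V where \<rho>x: "le_env \<rho>x (ext \<rho>' v)" and N: "le_store \<mu>' \<nu>" "le_comp N M2"
    "le_trace V T" and slice: "bslice \<mu> R T \<rho>x \<mu>' N V"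
    using IH 1(1,2) by (rule slices_belowE)
  have x: "le_val (\<rho>x 0) v" "le_env (\<rho>x \<circ> Suc) \<rho>'" using le_env_ext[OF \<rho>x] by blast+
  have "le_val (VInr (\<rho>x 0)) (VInr v)" using x(1) by (rule le_val.intros)
  then obtain \<rho>e e' where e': "eslice (VInr (\<rho>x 0)) e \<rho>e e'" "le_env \<rho>e \<rho>'" "le_exp e' e"
    using eslice_exists[OF e] by blast
  note join = is_join_pointwise_join[OF x(2) e'(2)]
  have "bslice \<mu> R (TCaseR e T) (pointwise_join (\<rho>x \<circ> Suc) \<rho>e) \<mu>' (CCase e' CHole N) (TCaseR e' V)"
    using 1(3) slice e'(1) join by (rule b_caseR)
  then show ?case
    using is_join_least[OF join, of \<rho>'] x(2) e' N
    by (blast intro: has_slice_belowI le_exp_le_comp.intros le_trace.intros)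
qed

lemma slices_below_app:
  assumes e1: "eval_exp \<rho>' e1 (VClo \<rho>c M)" and e2: "eval_exp \<rho>' e2 v2"
    and "eval T (ext (ext \<rho>c (VClo \<rho>c M)) v2) \<nu> M \<nu>' R'"
    and IH: "slices_below T (ext (ext \<rho>c (VClo \<rho>c M)) v2) \<nu> M \<nu>' R'"
  shows "slices_below (TApp e1 e2 T) \<rho>' \<nu> (CApp e1 e2) \<nu>' R'"
proof (rule slices_below_if_non_box[OF eval_app[OF e1 refl e2 assms(3)]], goal_cases)
  case (1 \<mu> R)
  obtain \<rho>b \<mu>' N V where \<rho>b: "le_env \<rho>b (ext (ext \<rho>c (VClo \<rho>c M)) v2)" and N: "le_store \<mu>' \<nu>"
    "le_comp N M" "le_trace V T" and slice: "bslice \<mu> R T \<rho>b \<mu>' N V"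
    using IH 1(1,2) by (rule slices_belowE)
  have arg: "le_val (\<rho>b 0) v2" and fv: "le_val (\<rho>b (Suc 0)) (VClo \<rho>c M)"
    using \<rho>b by (simp_all add: le_env_def) (metis ext_simps)+
  have clo: "le_val (VClo (\<lambda>i. \<rho>b (Suc (Suc i))) N) (VClo \<rho>c M)"
    using \<rho>b N(2) by (intro le_val.intros) (simp_all add: le_env_def, metis ext_simps(2))
  obtain \<rho>2 e2' where s2: "eslice (\<rho>b 0) e2 \<rho>2 e2'" "le_env \<rho>2 \<rho>'" "le_exp e2' e2"
    using eslice_exists[OF e2 arg] by blast
  note vjoin = is_join_join_val[OF fv clo]
  obtain \<rho>1 e1' where s1: "eslice (join_val (\<rho>b (Suc 0)) (VClo (\<lambda>i. \<rho>b (Suc (Suc i))) N)) e1 \<rho>1 e1'"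
    "le_env \<rho>1 \<rho>'" "le_exp e1' e1"
    using eslice_exists[OF e1 is_join_least[OF vjoin fv clo]] by blast
  note join = is_join_pointwise_join[OF s1(2) s2(2)]
  have "bslice \<mu> R (TApp e1 e2 T) (pointwise_join \<rho>1 \<rho>2) \<mu>' (CApp e1' e2') (TApp e1' e2' V)"
    using 1(3) slice s2(1) vjoin s1(1) join by (rule b_app)
  then show ?case
    using is_join_least[OF join, of \<rho>'] s1 s2 N
    by (blast intro: has_slice_belowI le_exp_le_comp.intros le_trace.intros)
qed

theorem eval_slices_below: "eval T \<rho>' \<nu> M' \<nu>' R' \<Longrightarrow> slices_below T \<rho>' \<nu> M' \<nu>' R'"
  by (induct rule: eval.induct)
     (blast intro: slices_below_return slices_below_raise slices_below_ref slices_below_assign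
        slices_below_deref slices_below_app slices_below_letS slices_below_letF slices_below_tryS
        slices_below_tryF slices_below_caseL slices_below_caseR)+

theorem lemma4p5:
  shows "(\<forall>\<mu> R T \<rho> \<mu>' M U \<rho>' \<mu>'' M' U'.
            bslice \<mu> R T \<rho> \<mu>' M U \<longrightarrow> bslice \<mu> R T \<rho>' \<mu>'' M' U' \<longrightarrow>
            (\<rho>, \<mu>', M, U) = (\<rho>', \<mu>'', M', U'))
       \<and> (\<forall>T \<rho>' \<nu> M' \<nu>' R'. eval T \<rho>' \<nu> M' \<nu>' R' \<longrightarrow>
            (\<forall>\<mu> R. le_store \<mu> \<nu>' \<and> le_res R R' \<longrightarrow>
              (\<exists>\<rho> \<mu>' M U. le_env \<rho> \<rho>' \<and> le_store \<mu>' \<nu> \<and> le_comp M M' \<and> le_trace U T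
                 \<and> bslice \<mu> R T \<rho> \<mu>' M U)))"
proof (intro conjI allI impI)
  show "(\<rho>, \<mu>', M, U) = (\<rho>', \<mu>'', M', U')"
    if "bslice \<mu> R T \<rho> \<mu>' M U" "bslice \<mu> R T \<rho>' \<mu>'' M' U'" for \<mu> R T \<rho> \<mu>' M U \<rho>' \<mu>'' M' U'
    using bslice_deterministic[OF that] by simp
next
  fix T \<rho>' \<nu> M' \<nu>' R' \<mu> R
  assume "eval T \<rho>' \<nu> M' \<nu>' R'" "le_store \<mu> \<nu>' \<and> le_res R R'"
  then have "has_slice_below \<mu> R T \<rho>' \<nu> M'"
    using eval_slices_below by (auto simp: slices_below_def)
  then show "\<exists>\<rho> \<mu>' M U. le_env \<rho> \<rho>' \<and> le_store \<mu>' \<nu> \<and> le_comp M M' \<and> le_trace U T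
                 \<and> bslice \<mu> R T \<rho> \<mu>' M U"
    by (simp add: has_slice_below_def)
qed

end
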